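(* Let $A$ be a complex $3$-dimensional binary associative superalgebra of type $(1,2)$. Then either $A$ is associative, or $A$ is isomorphic to one of $\mathrm{R}_{01}^{\mathrm{i}\sqrt3}$, $\mathrm{R}_{01}^{-\mathrm{i}\sqrt3}$, $\mathrm{R}_{07}^{\alpha}$ for some $\alpha\in\mathbb{C}\setminus\{0\}$, or $\mathrm{R}_{28}$.
   Context: All algebras are over $\mathbb{C}$; $\mathrm{i}=\sqrt{-1}$. A superalgebra is a $\mathbb{Z}_2$-graded algebra $A=A_0\oplus A_1$ with $A_iA_j\subseteq A_{i+j \bmod 2}$; $|x|\in\{0,1\}$ is the degree of a homogeneous $x$. It has type $(n,m)$ if $\dim A_0=n$, $\dim A_1=m$. Isomorphisms are grading-preserving algebra isomorphisms. The associator is $(x,y,z)=(xy)z-x(yz)$; a superalgebra is associative if $(x,y,z)=0$ for all $x,y,z$. A binary associative superalgebra is a superalgebra satisfying $(x,y,z)=-(-1)^{|y||z|}(x,z,y)=-(-1)^{|x||y|}(y,x,z)$ for all homogeneous $x,y,z$. Superalgebras of type $(1,2)$, in basis $e_1$ (even), $f_1,f_2$ (odd), listed by nonzero products (unlisted products are zero): $\mathrm{R}_{01}^{\alpha}$ ($\alpha\neq-1$): $e_1f_1=(1+\alpha)f_2,\ f_1e_1=(1-\alpha)f_2,\ f_1f_2=\frac{2(\alpha-1)}{\alpha+1}e_1,\ f_2f_1=-\frac{4}{\alpha+1}e_1$; $\mathrm{R}_{07}^{\alpha}$: $e_1f_1=(1+\alpha)f_2,\ f_1e_1=(1-\alpha)f_2,\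 f_1f_1=e_1$; $\mathrm{R}_{28}$: $e_1f_1=f_2,\ f_1e_1=-f_2,\ f_1f_1=e_1$. *)

theory Defs
  imports "HOL-Analysis.Analysis"
begin

text \<open>A superalgebra of type (1,2) over the complex numbers, given in the graded basis
  e1 (index 0, even), f1 (index 1, odd), f2 (index 2, odd) by its structure constants:
  the product of basis vectors i and j is the sum over k of c i j k times basis vector k.\<close>

type_synonym sc3 = "3 \<Rightarrow> 3 \<Rightarrow> 3 \<Rightarrow> complex"

definition deg :: "3 \<Rightarrow> nat" where
  "deg i = (if i = 0 then 0 else 1)"

definition graded_sc :: "sc3 \<Rightarrow> bool" where
  "graded_sc c \<longleftrightarrow> (\<forall>i j k. c i j k \<noteq> 0 \<longrightarrow> deg k = (deg i + deg j) mod 2)"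

definition smult :: "sc3 \<Rightarrow> complex^3 \<Rightarrow> complex^3 \<Rightarrow> complex^3" where
  "smult c x y = (\<chi> k. \<Sum>i\<in>UNIV. \<Sum>j\<in>UNIV. x$i * y$j * c i j k)"

definition sassoc :: "sc3 \<Rightarrow> complex^3 \<Rightarrow> complex^3 \<Rightarrow> complex^3 \<Rightarrow> complex^3" where
  "sassoc c x y z = smult c (smult c x y) z - smult c x (smult c y z)"

definition homog :: "complex^3 \<Rightarrow> nat \<Rightarrow> bool" where
  "homog x d \<longleftrightarrow> (\<forall>i. deg i \<noteq> d \<longrightarrow> x$i = 0)"

definition sc_associative :: "sc3 \<Rightarrow> bool" where
  "sc_associative c \<longleftrightarrow> (\<forall>x y z. sassoc c x y z = 0)"

definition binary_assoc_super :: "sc3 \<Rightarrow> bool" where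
  "binary_assoc_super c \<longleftrightarrow>
     (\<forall>x y z dx dy dz. dx < 2 \<and> dy < 2 \<and> dz < 2 \<and>
        homog x dx \<and> homog y dy \<and> homog z dz \<longrightarrow>
        sassoc c x y z = (- ((-1) ^ (dy * dz))) *s sassoc c x z y \<and>
        sassoc c x y z = (- ((-1) ^ (dx * dy))) *s sassoc c y x z)"

definition sc_iso :: "sc3 \<Rightarrow> sc3 \<Rightarrow> bool" where
  "sc_iso c c' \<longleftrightarrow> (\<exists>M :: complex^3^3. invertible M \<and>
      (\<forall>x d. homog x d \<longrightarrow> homog (M *v x) d) \<and>
      (\<forall>x y. M *v smult c x y = smult c' (M *v x) (M *v y)))"

definition R01 :: "complex \<Rightarrow> sc3" where
  "R01 \<alpha> i j k =
     (if i = 0 \<and> j = 1 \<and> k = 2 then 1 + \<alpha>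
      else if i = 1 \<and> j = 0 \<and> k = 2 then 1 - \<alpha>
      else if i = 1 \<and> j = 2 \<and> k = 0 then 2 * (\<alpha> - 1) / (\<alpha> + 1)
      else if i = 2 \<and> j = 1 \<and> k = 0 then - 4 / (\<alpha> + 1)
      else 0)"

definition R07 :: "complex \<Rightarrow> sc3" where
  "R07 \<alpha> i j k =
     (if i = 0 \<and> j = 1 \<and> k = 2 then 1 + \<alpha>
      else if i = 1 \<and> j = 0 \<and> k = 2 then 1 - \<alpha>
      else if i = 1 \<and> j = 1 \<and> k = 0 then 1
      else 0)"

definition R28 :: sc3 where
  "R28 i j k =
     (if i = 0 \<and> j = 1 \<and> k = 2 then 1
      else if i = 1 \<and> j = 0 \<and> k = 2 then -1
      else if i = 1 \<and> j = 1 \<and> k = 0 then 1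
      else 0)"

end

theory Submission
  imports Defs
begin

text \<open>Let e1 e1 = a e1. The super-identities force every associator with two even arguments
  to vanish, so left and right multiplication L, R by e1 on the odd part satisfy L^2 = a L,
  R^2 = a R and L R = R L.

  If a \<noteq> 0 the identities on associators with one or no even argument already force all
  associators to vanish, a finite Groebner-basis computation on the structure constants.

  If a = 0, L and R are commuting square-zero operators on the odd plane, so there is an odd basis
  x, y with e1 x = lam y, x e1 = mu y, e1 y = y e1 = 0, in which the only other products are
  x_i x_j = b_ij e1. The super-identities reduce to lam b22 = mu b22 = 0, mu b12 + lam b21 = 0 and
  lam b12 = (lam + mu) b21. Unless the algebra is associative, b22 = 0 and a rescaling of the basis
  gives R07 with \<alpha> = (lam - mu) / (lam + mu) when b12 = b21 = 0 and lam + mu \<noteq> 0, R28 when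
  lam + mu = 0, and otherwise R01 with the same \<alpha>, where now lam^2 + lam mu + mu^2 = 0 forces
  \<alpha>^2 = -3.\<close>

lemma UNIV_3_eq: "(UNIV::3 set) = {0, 1, 2}"
proof -
  have "(3::3) = 0" by simp
  then show ?thesis using UNIV_3 by auto
qed

lemma distinct_3 [simp]:
  "(0::3) \<noteq> 1" "(0::3) \<noteq> 2" "(1::3) \<noteq> 2" "(1::3) \<noteq> 0" "(2::3) \<noteq> 0" "(2::3) \<noteq> 1"
  by simp_all

lemma sum_UNIV_3: "sum f (UNIV::3 set) = f 0 + f 1 + f 2"
  unfolding UNIV_3_eq by (simp add: ac_simps)

lemma exhaust_3_zero: "(i::3) = 0 \<or> i = 1 \<or> i = 2"
  using UNIV_3_eq by blast

lemma all_3: "(\<forall>i::3. P i) \<longleftrightarrow> P 0 \<and> P 1 \<and> P 2"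
  by (metis UNIV_3_eq UNIV_I empty_iff insert_iff)

lemma deg_simps [simp]: "deg 0 = 0" "deg 1 = 1" "deg 2 = 1"
  by (simp_all add: deg_def)

lemma graded_sc_vanishing:
  assumes "graded_sc c"
  shows "c 0 0 1 = 0" "c 0 0 2 = 0" "c 0 1 0 = 0" "c 0 2 0 = 0" "c 1 0 0 = 0" "c 2 0 0 = 0"
    "c 1 1 1 = 0" "c 1 1 2 = 0" "c 1 2 1 = 0" "c 1 2 2 = 0"
    "c 2 1 1 = 0" "c 2 1 2 = 0" "c 2 2 1 = 0" "c 2 2 2 = 0"
proof -
  have "c i j k = 0" if "deg k \<noteq> (deg i + deg j) mod 2" for i j k
    using assms that unfolding graded_sc_def by blast
  then show "c 0 0 1 = 0" "c 0 0 2 = 0" "c 0 1 0 = 0" "c 0 2 0 = 0" "c 1 0 0 = 0" "c 2 0 0 = 0"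
    "c 1 1 1 = 0" "c 1 1 2 = 0" "c 1 2 1 = 0" "c 1 2 2 = 0"
    "c 2 1 1 = 0" "c 2 1 2 = 0" "c 2 2 1 = 0" "c 2 2 2 = 0"
    by simp_all
qed

lemma homog_iff:
  "homog x d \<longleftrightarrow> (d \<noteq> 0 \<longrightarrow> x$0 = 0) \<and> (d \<noteq> 1 \<longrightarrow> x$1 = 0 \<and> x$2 = 0)"
  by (auto simp: homog_def all_3)

lemma homog_axis: "homog (axis i 1) (deg i)"
  by (simp add: homog_def axis_def)

section \<open>Graded isomorphisms\<close>

definition block_diagonal :: "complex^3^3 \<Rightarrow> bool" where
  "block_diagonal M \<longleftrightarrow> M$0$1 = 0 \<and> M$0$2 = 0 \<and> M$1$0 = 0 \<and> M$2$0 = 0"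

lemma homog_preserving_iff_block_diagonal:
  "(\<forall>x d. homog x d \<longrightarrow> homog (M *v x) d) \<longleftrightarrow> block_diagonal M"
proof
  assume pres: "\<forall>x d. homog x d \<longrightarrow> homog (M *v x) d"
  have "homog (M *v axis 0 1) 0" "homog (M *v axis 1 1) 1" "homog (M *v axis 2 1) 1"
    using pres by (simp_all add: homog_iff axis_def)
  then show "block_diagonal M"
    by (simp add: homog_iff block_diagonal_def matrix_vector_mult_def sum_UNIV_3 axis_def)
next
  assume "block_diagonal M"
  then show "\<forall>x d. homog x d \<longrightarrow> homog (M *v x) d"
    by (auto simp: homog_iff block_diagonal_def matrix_vector_mult_def sum_UNIV_3)
qed

lemma block_diagonal_inverse:
  assumes "block_diagonal M" and "M ** N = mat 1" and "N ** M = mat 1"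
  shows "block_diagonal N"
proof -
  have "(M ** N)$0$0 = 1" "(M ** N)$0$1 = 0" "(M ** N)$0$2 = 0"
    "(N ** M)$1$0 = 0" "(N ** M)$2$0 = 0"
    using assms(2,3) by (simp_all add: mat_def)
  then show ?thesis
    using assms(1) by (auto simp: block_diagonal_def matrix_matrix_mult_def sum_UNIV_3)
qed

lemma invertible_block_diagonal_iff:
  assumes "block_diagonal P"
  shows "invertible P \<longleftrightarrow> P$0$0 * (P$1$1 * P$2$2 - P$1$2 * P$2$1) \<noteq> 0"
proof -
  have three: "(3::3) = 0" by simp
  have "det P = P$0$0 * (P$1$1 * P$2$2 - P$1$2 * P$2$1)"
    using assms by (simp add: det_3 three block_diagonal_def algebra_simps)
  then show ?thesis by (simp add: invertible_det_nz)
qed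

lemma sassoc_hom:
  assumes "\<forall>x y. M *v smult c x y = smult c' (M *v x) (M *v y)"
  shows "M *v sassoc c x y z = sassoc c' (M *v x) (M *v y) (M *v z)"
  unfolding sassoc_def using assms by (simp add: matrix_vector_mult_diff_distrib)

lemma sc_iso_sym:
  assumes "sc_iso c c'"
  shows "sc_iso c' c"
proof -
  obtain M where inv: "invertible M" and pres: "\<forall>x d. homog x d \<longrightarrow> homog (M *v x) d"
    and hom: "\<forall>x y. M *v smult c x y = smult c' (M *v x) (M *v y)"
    using assms unfolding sc_iso_def by blast
  obtain N where MN: "M ** N = mat 1" and NM: "N ** M = mat 1"
    using inv unfolding invertible_def by blast
  have "block_diagonal N"
    using block_diagonal_inverse MN NM pres homog_preserving_iff_block_diagonal by blast
  moreover have "N *v smult c' x y = smult c (N *v x) (N *v y)" for x y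
  proof -
    have "N *v smult c' x y = N *v smult c' (M *v (N *v x)) (M *v (N *v y))"
      by (simp add: matrix_vector_mul_assoc MN)
    also have "\<dots> = N *v (M *v smult c (N *v x) (N *v y))"
      by (simp only: hom)
    also have "\<dots> = smult c (N *v x) (N *v y)"
      by (simp add: matrix_vector_mul_assoc NM)
    finally show ?thesis .
  qed
  ultimately show ?thesis
    unfolding sc_iso_def invertible_def
    using MN NM homog_preserving_iff_block_diagonal by blast
qed

lemma sc_iso_trans:
  assumes "sc_iso c c'" and "sc_iso c' c''"
  shows "sc_iso c c''"
proof -
  obtain M1 where "invertible M1" "\<forall>x d. homog x d \<longrightarrow> homog (M1 *v x) d"
    "\<forall>x y. M1 *v smult c x y = smult c' (M1 *v x) (M1 *v y)"
    using assms(1) unfolding sc_iso_def by blast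
  moreover obtain M2 where "invertible M2" "\<forall>x d. homog x d \<longrightarrow> homog (M2 *v x) d"
    "\<forall>x y. M2 *v smult c' x y = smult c'' (M2 *v x) (M2 *v y)"
    using assms(2) unfolding sc_iso_def by blast
  ultimately show ?thesis
    unfolding sc_iso_def
    by (intro exI[of _ "M2 ** M1"]) (simp add: invertible_mult matrix_vector_mul_assoc[symmetric])
qed

lemma sc_iso_associative:
  assumes "sc_iso c c'" and "sc_associative c'"
  shows "sc_associative c"
  unfolding sc_associative_def
proof (intro allI)
  fix x y z
  obtain M N where NM: "N ** M = mat 1"
    and hom: "\<forall>x y. M *v smult c x y = smult c' (M *v x) (M *v y)"
    using assms(1) unfolding sc_iso_def invertible_def by blast
  have "sassoc c x y z = N *v (M *v sassoc c x y z)"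
    by (simp add: matrix_vector_mul_assoc NM)
  also have "\<dots> = 0"
    using sassoc_hom[OF hom] assms(2) unfolding sc_associative_def by simp
  finally show "sassoc c x y z = 0" .
qed

lemma sc_iso_binary_assoc_super:
  assumes "sc_iso c c'" and "binary_assoc_super c"
  shows "binary_assoc_super c'"
  unfolding binary_assoc_super_def
proof (intro allI impI)
  fix x y z :: "complex^3" and dx dy dz :: nat
  assume h: "dx < 2 \<and> dy < 2 \<and> dz < 2 \<and> homog x dx \<and> homog y dy \<and> homog z dz"
  obtain N M where MN: "M ** N = mat 1" and pres: "\<forall>x d. homog x d \<longrightarrow> homog (N *v x) d"
    and hom: "\<forall>x y. N *v smult c' x y = smult c (N *v x) (N *v y)"
    using sc_iso_sym[OF assms(1)] unfolding sc_iso_def invertible_def by blast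
  have inj: "u = v" if "N *v u = N *v v" for u v :: "complex^3"
    by (metis that MN matrix_vector_mul_assoc matrix_vector_mul_lid)
  have NA: "N *v sassoc c' u v w = sassoc c (N *v u) (N *v v) (N *v w)" for u v w
    using sassoc_hom[OF hom] .
  have "homog (N *v x) dx" "homog (N *v y) dy" "homog (N *v z) dz"
    using h pres by blast+
  with h assms(2) have
    "sassoc c (N *v x) (N *v y) (N *v z) =
      (- ((-1) ^ (dy * dz))) *s sassoc c (N *v x) (N *v z) (N *v y)"
    "sassoc c (N *v x) (N *v y) (N *v z) =
      (- ((-1) ^ (dx * dy))) *s sassoc c (N *v y) (N *v x) (N *v z)"
    unfolding binary_assoc_super_def by blast+
  then show "sassoc c' x y z = (- ((-1) ^ (dy * dz))) *s sassoc c' x z y \<and>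
        sassoc c' x y z = (- ((-1) ^ (dx * dy))) *s sassoc c' y x z"
    by (metis inj NA vector_scalar_commute)
qed

lemma sc_iso_of_basis:
  fixes P :: "complex^3^3"
  assumes "invertible P" and "block_diagonal P"
    and prod: "\<And>i j. smult c (column i P) (column j P) = P *v (\<chi> k. c' i j k)"
  shows "sc_iso c' c"
  unfolding sc_iso_def
proof (intro exI conjI allI)
  fix x y
  have "smult c (P *v x) (P *v y) $ m =
      (\<Sum>i\<in>UNIV. \<Sum>j\<in>UNIV. x$i * y$j * smult c (column i P) (column j P) $ m)" for m
    by (simp add: smult_def matrix_vector_mult_def column_def sum_UNIV_3 algebra_simps)
  moreover have "(P *v smult c' x y) $ m =
      (\<Sum>i\<in>UNIV. \<Sum>j\<in>UNIV. x$i * y$j * (P *v (\<chi> k. c' i j k)) $ m)" for m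
    by (simp add: smult_def matrix_vector_mult_def sum_UNIV_3 algebra_simps)
  ultimately show "P *v smult c' x y = smult c (P *v x) (P *v y)"
    by (simp add: vec_eq_iff prod)
qed (use assms(1,2) homog_preserving_iff_block_diagonal[of P] in auto)

section \<open>Associators in the standard basis\<close>

lemma sum_axis_mult: "(\<Sum>i\<in>UNIV. axis a 1 $ i * f i) = (f a :: complex)"
  by (simp add: axis_def if_distrib[of "\<lambda>t. t * _"] cong: if_cong)

lemma smult_axis: "smult c (axis i 1) (axis j 1) = (\<chi> k. c i j k)"
  by (simp add: smult_def vec_eq_iff mult.assoc sum_distrib_left[symmetric] sum_axis_mult)

definition assoc_coeff :: "sc3 \<Rightarrow> 3 \<Rightarrow> 3 \<Rightarrow> 3 \<Rightarrow> 3 \<Rightarrow> complex" where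
  "assoc_coeff c i j k m = (\<Sum>p\<in>UNIV. c i j p * c p k m) - (\<Sum>p\<in>UNIV. c j k p * c i p m)"

lemma sassoc_expand:
  "sassoc c x y z $ m =
     (\<Sum>i\<in>UNIV. x$i * (\<Sum>j\<in>UNIV. y$j * (\<Sum>k\<in>UNIV. z$k * assoc_coeff c i j k m)))"
  unfolding sassoc_def smult_def assoc_coeff_def by (simp add: sum_UNIV_3 algebra_simps)

lemma sassoc_axis: "sassoc c (axis i 1) (axis j 1) (axis k 1) $ m = assoc_coeff c i j k m"
  by (simp add: sassoc_expand sum_axis_mult)

lemma sc_associative_iff_assoc_coeff:
  "sc_associative c \<longleftrightarrow> (\<forall>i j k m. assoc_coeff c i j k m = 0)"
proof
  assume "sc_associative c"
  then show "\<forall>i j k m. assoc_coeff c i j k m = 0"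
    unfolding sc_associative_def by (metis sassoc_axis zero_index)
next
  assume "\<forall>i j k m. assoc_coeff c i j k m = 0"
  then show "sc_associative c"
    unfolding sc_associative_def vec_eq_iff by (simp add: sassoc_expand)
qed

lemma assoc_coeff_graded:
  assumes g: "graded_sc c" and dm: "deg m \<noteq> (deg i + deg j + deg k) mod 2"
  shows "assoc_coeff c i j k m = 0"
proof -
  have vanish: "c r s t = 0" if "deg t \<noteq> (deg r + deg s) mod 2" for r s t
    using g that unfolding graded_sc_def by blast
  have left: "c i j p * c p k m = 0" for p
  proof (cases "deg p = (deg i + deg j) mod 2")
    case True
    then have "deg m \<noteq> (deg p + deg k) mod 2"
      using dm by (simp add: mod_add_left_eq)
    then show ?thesis by (simp add: vanish)
  qed (simp add: vanish)
  have right: "c j k p * c i p m = 0" for p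
  proof (cases "deg p = (deg j + deg k) mod 2")
    case True
    then have "deg m \<noteq> (deg i + deg p) mod 2"
      using dm by (simp add: mod_add_right_eq add.assoc)
    then show ?thesis by (simp add: vanish)
  qed (simp add: vanish)
  show ?thesis
    unfolding assoc_coeff_def left right by simp
qed

lemma binary_assoc_super_assoc_coeff:
  assumes "binary_assoc_super c"
  shows "assoc_coeff c i j k m = - ((-1) ^ (deg j * deg k)) * assoc_coeff c i k j m"
    and "assoc_coeff c i j k m = - ((-1) ^ (deg i * deg j)) * assoc_coeff c j i k m"
proof -
  have "deg l < 2" for l by (simp add: deg_def)
  then have "sassoc c (axis i 1) (axis j 1) (axis k 1) =
      (- ((-1) ^ (deg j * deg k))) *s sassoc c (axis i 1) (axis k 1) (axis j 1) \<and>
    sassoc c (axis i 1) (axis j 1) (axis k 1) =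
      (- ((-1) ^ (deg i * deg j))) *s sassoc c (axis j 1) (axis i 1) (axis k 1)"
    using assms homog_axis unfolding binary_assoc_super_def by blast
  then show "assoc_coeff c i j k m = - ((-1) ^ (deg j * deg k)) * assoc_coeff c i k j m"
    and "assoc_coeff c i j k m = - ((-1) ^ (deg i * deg j)) * assoc_coeff c j i k m"
    by (metis sassoc_axis vector_smult_component)+
qed

lemma binary_assoc_super_two_even:
  assumes "binary_assoc_super c"
  shows "assoc_coeff c 0 0 j m = 0" and "assoc_coeff c j 0 0 m = 0" and "assoc_coeff c 0 j 0 m = 0"
proof -
  note rel = binary_assoc_super_assoc_coeff[OF assms]
  show 1: "assoc_coeff c 0 0 j m = 0"
    using rel(2)[of 0 0 j m] by (simp add: eq_neg_iff_add_eq_0 flip: mult_2)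
  show "assoc_coeff c j 0 0 m = 0"
    using rel(1)[of j 0 0 m] by (simp add: eq_neg_iff_add_eq_0 flip: mult_2)
  show "assoc_coeff c 0 j 0 m = 0"
    using rel(1)[of 0 j 0 m] 1 by simp
qed

lemma binary_assoc_super_one_even:
  assumes "binary_assoc_super c" and "j \<noteq> 0" and "k \<noteq> 0"
  shows "assoc_coeff c 0 j k m = assoc_coeff c 0 k j m"
    and "assoc_coeff c j 0 k m = - assoc_coeff c 0 j k m"
    and "assoc_coeff c j k 0 m = - assoc_coeff c j 0 k m"
proof -
  note rel = binary_assoc_super_assoc_coeff[OF assms(1)]
  show "assoc_coeff c 0 j k m = assoc_coeff c 0 k j m"
    using rel(1)[of 0 j k m] assms(2,3) by (simp add: deg_def)
  show "assoc_coeff c j 0 k m = - assoc_coeff c 0 j k m"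
    using rel(2)[of j 0 k m] by simp
  show "assoc_coeff c j k 0 m = - assoc_coeff c j 0 k m"
    using rel(1)[of j k 0 m] by simp
qed

lemma binary_assoc_super_all_odd:
  assumes "binary_assoc_super c" and "i \<noteq> 0" and "j \<noteq> 0" and "k \<noteq> 0"
  shows "assoc_coeff c i j k m = assoc_coeff c i k j m"
    and "assoc_coeff c i j k m = assoc_coeff c j i k m"
proof -
  note rel = binary_assoc_super_assoc_coeff[OF assms(1)]
  show "assoc_coeff c i j k m = assoc_coeff c i k j m"
    using rel(1)[of i j k m] assms(3,4) by (simp add: deg_def)
  show "assoc_coeff c i j k m = assoc_coeff c j i k m"
    using rel(2)[of i j k m] assms(2,3) by (simp add: deg_def)
qed

section \<open>The case e1 e1 \<noteq> 0\<close>

lemma assoc_coeff_one_even_eq_0: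
  assumes g: "graded_sc c" and b: "binary_assoc_super c" and a: "c 0 0 0 \<noteq> 0"
    and j: "j \<noteq> 0" and k: "k \<noteq> 0"
  shows "assoc_coeff c 0 j k m = 0" and "assoc_coeff c j 0 k m = 0" and "assoc_coeff c j k 0 m = 0"
proof -
  note expand = assoc_coeff_def sum_UNIV_3 graded_sc_vanishing[OF g]
  note sq = binary_assoc_super_two_even(1,2)[OF b]
  note one = binary_assoc_super_one_even[OF b]
  note hyps = sq[of 1 1] sq[of 1 2] sq[of 2 1] sq[of 2 2]
    one[OF distinct_3(4) distinct_3(4), where m = 0]
    one[OF distinct_3(4) distinct_3(5), where m = 0]
    one[OF distinct_3(5) distinct_3(4), where m = 0]
    one[OF distinct_3(5) distinct_3(5), where m = 0]
  \<comment> \<open>X(u, v) = (e1, u, v) is symmetric. As L^2 = a L and R^2 = a R for L = e1 \<cdot> _ and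
    R = _ \<cdot> e1, X vanishes for u in the image of L or v in the image of R; for u in ker L and v
    in ker R the identities (e1, u, v) = (u, v, e1) = - (u, e1, v) give X(u, v) = - a u v = a u v.
    Since a \<noteq> 0, image and kernel of L (and of R) span the odd part.\<close>
  have "assoc_coeff c 0 1 1 0 = 0" "assoc_coeff c 0 1 2 0 = 0"
    "assoc_coeff c 0 2 1 0 = 0" "assoc_coeff c 0 2 2 0 = 0"
    unfolding expand
    apply (insert hyps[unfolded expand] a)
    apply algebra+
    done
  then have "assoc_coeff c 0 j k 0 = 0"
    using j k exhaust_3_zero[of j] exhaust_3_zero[of k] by auto
  moreover have "deg j = 1" "deg k = 1"
    using j k by (simp_all add: deg_def)
  ultimately have
    "assoc_coeff c 0 j k m = 0 \<and> assoc_coeff c j 0 k m = 0 \<and> assoc_coeff c j k 0 m = 0"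
    using one[OF j k] assoc_coeff_graded[OF g, of m] by (cases "m = 0") (simp_all add: deg_def)
  then show "assoc_coeff c 0 j k m = 0" and "assoc_coeff c j 0 k m = 0"
    and "assoc_coeff c j k 0 m = 0"
    by blast+
qed

lemma assoc_coeff_all_odd_eq_0:
  assumes g: "graded_sc c" and b: "binary_assoc_super c" and a: "c 0 0 0 \<noteq> 0"
    and "i \<noteq> 0" and "j \<noteq> 0" and "k \<noteq> 0"
  shows "assoc_coeff c i j k m = 0"
proof -
  note expand = assoc_coeff_def sum_UNIV_3 graded_sc_vanishing[OF g]
  note sq = binary_assoc_super_two_even[OF b]
  note one = assoc_coeff_one_even_eq_0[OF g b a]
  note sym = binary_assoc_super_all_odd[OF b]
  note hyps = sq[of 1 1] sq[of 1 2] sq[of 2 1] sq[of 2 2]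
    one[OF distinct_3(4) distinct_3(4), of 0] one[OF distinct_3(4) distinct_3(5), of 0]
    one[OF distinct_3(5) distinct_3(4), of 0] one[OF distinct_3(5) distinct_3(5), of 0]
    sym(1)[OF distinct_3(4) distinct_3(4) distinct_3(5), where m = 1]
    sym(1)[OF distinct_3(4) distinct_3(4) distinct_3(5), where m = 2]
    sym(2)[OF distinct_3(4) distinct_3(5) distinct_3(4), where m = 1]
    sym(2)[OF distinct_3(4) distinct_3(5) distinct_3(4), where m = 2]
    sym(2)[OF distinct_3(4) distinct_3(5) distinct_3(5), where m = 1]
    sym(2)[OF distinct_3(4) distinct_3(5) distinct_3(5), where m = 2]
    sym(1)[OF distinct_3(5) distinct_3(4) distinct_3(5), where m = 1]
    sym(1)[OF distinct_3(5) distinct_3(4) distinct_3(5), where m = 2]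
  have "assoc_coeff c 1 1 1 1 = 0" "assoc_coeff c 1 1 1 2 = 0" "assoc_coeff c 1 1 2 1 = 0"
    "assoc_coeff c 1 1 2 2 = 0" "assoc_coeff c 1 2 1 1 = 0" "assoc_coeff c 1 2 1 2 = 0"
    "assoc_coeff c 1 2 2 1 = 0" "assoc_coeff c 1 2 2 2 = 0" "assoc_coeff c 2 1 1 1 = 0"
    "assoc_coeff c 2 1 1 2 = 0" "assoc_coeff c 2 1 2 1 = 0" "assoc_coeff c 2 1 2 2 = 0"
    "assoc_coeff c 2 2 1 1 = 0" "assoc_coeff c 2 2 1 2 = 0" "assoc_coeff c 2 2 2 1 = 0"
    "assoc_coeff c 2 2 2 2 = 0"
    unfolding expand
    apply (insert hyps[unfolded expand] a)
    apply algebra+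
    done
  then show ?thesis
    using assms(4-6) exhaust_3_zero[of i] exhaust_3_zero[of j] exhaust_3_zero[of k]
      exhaust_3_zero[of m] assoc_coeff_graded[OF g, of m i j k]
    by (cases "m = 0") (auto simp: deg_def)
qed

lemma sc_associative_if_even_square_nonzero:
  assumes g: "graded_sc c" and b: "binary_assoc_super c" and a: "c 0 0 0 \<noteq> 0"
  shows "sc_associative c"
  unfolding sc_associative_iff_assoc_coeff
proof (intro allI)
  fix i j k m
  show "assoc_coeff c i j k m = 0"
    using binary_assoc_super_two_even[OF b] assoc_coeff_one_even_eq_0[OF g b a]
      assoc_coeff_all_odd_eq_0[OF g b a]
    by (cases "i = 0"; cases "j = 0"; cases "k = 0") simp_all
qed

section \<open>Normal forms with e1 e1 = 0\<close>

definition sc_normal_form ::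
  "complex \<Rightarrow> complex \<Rightarrow> complex \<Rightarrow> complex \<Rightarrow> complex \<Rightarrow> complex \<Rightarrow> sc3" where
  "sc_normal_form lam mu b11 b12 b21 b22 i j k =
    (if i = 0 \<and> j = 1 \<and> k = 2 then lam else if i = 1 \<and> j = 0 \<and> k = 2 then mu
     else if i = 1 \<and> j = 1 \<and> k = 0 then b11 else if i = 1 \<and> j = 2 \<and> k = 0 then b12
     else if i = 2 \<and> j = 1 \<and> k = 0 then b21 else if i = 2 \<and> j = 2 \<and> k = 0 then b22 else 0)"

lemma R01_eq_sc_normal_form:
  "R01 \<alpha> = sc_normal_form (1 + \<alpha>) (1 - \<alpha>) 0 (2 * (\<alpha> - 1) / (\<alpha> + 1)) (- 4 / (\<alpha> + 1)) 0"
  by (intro ext) (simp add: R01_def sc_normal_form_def)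

lemma R07_eq_sc_normal_form: "R07 \<alpha> = sc_normal_form (1 + \<alpha>) (1 - \<alpha>) 1 0 0 0"
  by (intro ext) (simp add: R07_def sc_normal_form_def)

lemma R28_eq_sc_normal_form: "R28 = sc_normal_form 1 (- 1) 1 0 0 0"
  by (intro ext) (simp add: R28_def sc_normal_form_def)

lemma sc_normal_form_binary_relations:
  assumes "binary_assoc_super (sc_normal_form lam mu b11 b12 b21 b22)"
  shows "lam * b22 = 0" and "mu * b22 = 0" and "mu * b12 + lam * b21 = 0"
    and "lam * b12 = (lam + mu) * b21"
proof -
  note rel = binary_assoc_super_one_even[OF assms]
  have "lam * b22 = 0" "mu * b22 = - (lam * b22)" "mu * b21 - lam * b12 = - (lam * b21)"
    "- (mu * b12) = - (mu * b21 - lam * b12)"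
    using rel[OF distinct_3(4) distinct_3(5), where m = 0]
      rel[OF distinct_3(4) distinct_3(4), where m = 0]
    by (simp_all add: assoc_coeff_def sum_UNIV_3 sc_normal_form_def)
  then show "lam * b22 = 0" and "mu * b22 = 0" and "mu * b12 + lam * b21 = 0"
    and "lam * b12 = (lam + mu) * b21"
    by (simp_all add: algebra_simps)
qed

lemma sc_normal_form_associative:
  assumes "lam * b22 = 0" and "mu * b22 = 0" and "mu * b12 = 0" and "lam * b21 = 0"
    and "lam * b12 = mu * b21" and "(lam - mu) * b11 = 0"
  shows "sc_associative (sc_normal_form lam mu b11 b12 b21 b22)"
  unfolding sc_associative_iff_assoc_coeff all_3
  using assms by (simp add: assoc_coeff_def sum_UNIV_3 sc_normal_form_def algebra_simps)

lemma sc_normal_form_rescale: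
  assumes "p \<noteq> 0" and "xa \<noteq> 0" and "yb \<noteq> 0"
    and "lam' * yb = p * xa * lam" and "mu' * yb = p * xa * mu"
    and "p * b11' = xa^2 * b11 + xa * xb * (b12 + b21) + xb^2 * b22"
    and "p * b12' = yb * (xa * b12 + xb * b22)" and "p * b21' = yb * (xa * b21 + xb * b22)"
    and "p * b22' = yb^2 * b22"
  shows "sc_iso (sc_normal_form lam mu b11 b12 b21 b22)
    (sc_normal_form lam' mu' b11' b12' b21' b22')"
proof -
  \<comment> \<open>the new basis is p e1, xa f1 + xb f2, yb f2\<close>
  define P :: "complex^3^3" where
    "P = (\<chi> r s. if r = 0 \<and> s = 0 then p else if r = 1 \<and> s = 1 then xa
       else if r = 2 \<and> s = 1 then xb else if r = 2 \<and> s = 2 then yb else 0)"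
  have blk: "block_diagonal P"
    by (simp add: P_def block_diagonal_def)
  moreover have "invertible P"
    unfolding invertible_block_diagonal_iff[OF blk] using assms(1-3) by (simp add: P_def)
  moreover have "smult (sc_normal_form lam mu b11 b12 b21 b22) (column i P) (column j P) =
      P *v (\<chi> k. sc_normal_form lam' mu' b11' b12' b21' b22' i j k)" for i j
  proof -
    have "\<forall>i j. smult (sc_normal_form lam mu b11 b12 b21 b22) (column i P) (column j P) =
      P *v (\<chi> k. sc_normal_form lam' mu' b11' b12' b21' b22' i j k)"
      unfolding all_3 vec_eq_iff
      using assms
      by (simp add: smult_def column_def matrix_vector_mult_def sum_UNIV_3 P_def sc_normal_form_def
          power2_eq_square algebra_simps)
    then show ?thesis by blast
  qed
  ultimately show ?thesis
    using sc_iso_of_basis sc_iso_sym by blast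
qed

lemma sc_normal_form_iso_R07:
  assumes b11: "b11 \<noteq> 0" and lm: "lam + mu \<noteq> 0"
  shows "sc_iso (sc_normal_form lam mu b11 0 0 0) (R07 ((lam - mu) / (lam + mu)))"
proof -
  define yb where "yb = b11 * (lam + mu) / 2"
  have "1 + (lam - mu) / (lam + mu) = 2 * lam / (lam + mu)"
    "1 - (lam - mu) / (lam + mu) = 2 * mu / (lam + mu)"
    using lm by (simp_all add: field_simps)
  then have "(1 + (lam - mu) / (lam + mu)) * yb = b11 * 1 * lam"
    "(1 - (lam - mu) / (lam + mu)) * yb = b11 * 1 * mu"
    using lm by (simp_all add: yb_def)
  moreover have "yb \<noteq> 0" using b11 lm by (simp add: yb_def)
  ultimately show ?thesis
    unfolding R07_eq_sc_normal_form
    by (intro sc_normal_form_rescale[where p = b11 and xa = 1 and xb = 0 and yb = yb])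
      (use b11 in simp_all)
qed

lemma sc_normal_form_iso_R28:
  assumes "b11 \<noteq> 0" and "lam \<noteq> 0"
  shows "sc_iso (sc_normal_form lam (- lam) b11 0 0 0) R28"
  unfolding R28_eq_sc_normal_form
  by (rule sc_normal_form_rescale[where p = b11 and xa = 1 and xb = 0 and yb = "b11 * lam"])
    (use assms in simp_all)

lemma eisenstein_norm_eq_0_imp:
  fixes lam mu :: complex
  assumes h: "lam^2 + lam * mu + mu^2 = 0" and l0: "lam \<noteq> 0"
  shows "mu \<noteq> 0" and "lam + mu \<noteq> 0" and "((lam - mu) / (lam + mu))^2 = - 3"
proof -
  show "mu \<noteq> 0" using h l0 by auto
  show lm: "lam + mu \<noteq> 0"
  proof
    assume "lam + mu = 0"
    then have "lam^2 = 0" using h by algebra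
    then show False using l0 by simp
  qed
  have "(lam - mu)^2 = - 3 * (lam + mu)^2" using h by algebra
  then show "((lam - mu) / (lam + mu))^2 = - 3" using lm by (simp add: power_divide field_simps)
qed

lemma sc_normal_form_iso_R01:
  assumes h: "lam^2 + lam * mu + mu^2 = 0" and l0: "lam \<noteq> 0"
    and r1: "mu * b12 + lam * b21 = 0" and r2: "lam * b12 = (lam + mu) * b21"
    and b: "b12 \<noteq> 0 \<or> b21 \<noteq> 0"
  shows "sc_iso (sc_normal_form lam mu b11 b12 b21 0) (R01 ((lam - mu) / (lam + mu)))"
proof -
  obtain d where d: "d = lam + mu" and d0: "d \<noteq> 0"
    using eisenstein_norm_eq_0_imp(2)[OF h l0] by blast
  have b21: "b21 \<noteq> 0" using r1 b eisenstein_norm_eq_0_imp(1)[OF h l0] by auto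
  have bs: "b12 + b21 \<noteq> 0"
  proof
    assume "b12 + b21 = 0"
    then have "(lam - mu) * b21 = 0" using r1 by algebra
    then have "lam = mu" using b21 by simp
    then show False using h l0 by (simp add: power2_eq_square)
  qed
  have hB: "d * b12 = mu * b21" using r1 r2 d by algebra
  \<comment> \<open>\<kappa> kills the new b11; s and t make the new lam, mu, b21 equal to 1 + \<alpha>, 1 - \<alpha>
    and - 4 / (\<alpha> + 1).\<close>
  define \<alpha> where "\<alpha> = (lam - mu) / d"
  define s where "s = csqrt (- 4 / (lam * b21))"
  define t where "t = s * d / 2"
  define \<kappa> where "\<kappa> = - b11 / (b12 + b21)"
  have s2: "s^2 = - 4 / (lam * b21)" by (simp add: s_def)
  then have s0: "s \<noteq> 0" using l0 b21 by auto
  have "t * s = s^2 * d / 2"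
    by (simp add: t_def power2_eq_square)
  also have "\<dots> = - 2 * d / (lam * b21)"
    using l0 b21 by (simp add: s2 field_simps)
  finally have ts: "t * s = - 2 * d / (lam * b21)" .
  have \<alpha>: "1 + \<alpha> = 2 * lam / d" "1 - \<alpha> = 2 * mu / d"
    "\<alpha> + 1 = 2 * lam / d" "\<alpha> - 1 = - 2 * mu / d"
    using d d0 by (simp_all add: \<alpha>_def field_simps)
  show ?thesis
    unfolding R01_eq_sc_normal_form d[symmetric] \<alpha>_def[symmetric]
  proof (rule sc_normal_form_rescale[where p = 1 and xa = s and xb = "s * \<kappa>" and yb = t])
    show "t \<noteq> 0" using s0 d0 by (simp add: t_def)
    show "(1 + \<alpha>) * t = 1 * s * lam" "(1 - \<alpha>) * t = 1 * s * mu"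
      using d0 by (simp_all add: \<alpha> t_def field_simps)
    show "1 * 0 = s^2 * b11 + s * (s * \<kappa>) * (b12 + b21) + (s * \<kappa>)^2 * 0"
      using bs by (simp add: \<kappa>_def power2_eq_square field_simps)
    have "t * (s * b12) = - 2 * (d * b12) / (lam * b21)"
      using ts by (simp add: field_simps)
    also have "\<dots> = - 2 * (mu * b21) / (lam * b21)"
      by (simp only: hB)
    also have "\<dots> = - 2 * mu / lam"
      using b21 by simp
    finally show "1 * (2 * (\<alpha> - 1) / (\<alpha> + 1)) = t * (s * b12 + s * \<kappa> * 0)"
      using d0 l0 by (simp add: \<alpha> field_simps)
    show "1 * (- 4 / (\<alpha> + 1)) = t * (s * b21 + s * \<kappa> * 0)"
      using d0 l0 b21 ts by (simp add: \<alpha> field_simps)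
  qed (use s0 in simp_all)
qed

lemma complex_square_eq_neg_three:
  fixes z :: complex
  assumes "z^2 = - 3"
  shows "z = \<i> * complex_of_real (sqrt 3) \<or> z = - \<i> * complex_of_real (sqrt 3)"
proof -
  have "(\<i> * complex_of_real (sqrt 3))^2 = - 3"
    by (simp add: power_mult_distrib flip: of_real_power)
  then have "(z - \<i> * complex_of_real (sqrt 3)) * (z + \<i> * complex_of_real (sqrt 3)) = 0"
    using assms by (simp add: algebra_simps power2_eq_square)
  then show ?thesis
    by (auto simp: eq_neg_iff_add_eq_0)
qed

definition sc_classified :: "sc3 \<Rightarrow> bool" where
  "sc_classified c \<longleftrightarrow> sc_associative c
    \<or> sc_iso c (R01 (\<i> * complex_of_real (sqrt 3)))
    \<or> sc_iso c (R01 (- \<i> * complex_of_real (sqrt 3)))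
    \<or> (\<exists>\<alpha>. \<alpha> \<noteq> 0 \<and> sc_iso c (R07 \<alpha>))
    \<or> sc_iso c R28"

lemma sc_classified_iso:
  assumes "sc_iso c c'" and "sc_classified c'"
  shows "sc_classified c"
  using assms sc_iso_associative sc_iso_trans unfolding sc_classified_def by meson

lemma sc_normal_form_diagonal_classified:
  assumes b11: "b11 \<noteq> 0" and "lam \<noteq> mu"
  shows "sc_classified (sc_normal_form lam mu b11 0 0 0)"
proof (cases "lam + mu = 0")
  case True
  then have "mu = - lam" and "lam \<noteq> 0"
    using \<open>lam \<noteq> mu\<close> by (auto simp: eq_neg_iff_add_eq_0 add.commute)
  then show ?thesis
    using sc_normal_form_iso_R28[OF b11] unfolding sc_classified_def by auto
next
  case False
  have "(lam - mu) / (lam + mu) \<noteq> 0"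
    using \<open>lam \<noteq> mu\<close> False by simp
  then show ?thesis
    using sc_normal_form_iso_R07[OF b11 False] unfolding sc_classified_def by blast
qed

lemma sc_normal_form_offdiagonal_classified:
  assumes h: "lam^2 + lam * mu + mu^2 = 0" and l0: "lam \<noteq> 0"
    and r1: "mu * b12 + lam * b21 = 0" and r2: "lam * b12 = (lam + mu) * b21"
    and b: "b12 \<noteq> 0 \<or> b21 \<noteq> 0"
  shows "sc_classified (sc_normal_form lam mu b11 b12 b21 0)"
proof -
  have "(lam - mu) / (lam + mu) = \<i> * complex_of_real (sqrt 3)
      \<or> (lam - mu) / (lam + mu) = - \<i> * complex_of_real (sqrt 3)"
    using complex_square_eq_neg_three eisenstein_norm_eq_0_imp(3)[OF h l0] by blast
  then show ?thesis
    using sc_normal_form_iso_R01[OF h l0 r1 r2 b] unfolding sc_classified_def by auto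
qed

lemma sc_normal_form_classified:
  assumes "binary_assoc_super (sc_normal_form lam mu b11 b12 b21 b22)"
  shows "sc_classified (sc_normal_form lam mu b11 b12 b21 b22)"
proof (cases "(lam - mu) * b11 = 0 \<and> mu * b12 = 0 \<and> lam * b21 = 0")
  case True
  note rel = sc_normal_form_binary_relations[OF assms]
  have "lam * b12 = mu * b21" using True rel(4) by (simp add: algebra_simps)
  then show ?thesis
    using True rel sc_normal_form_associative unfolding sc_classified_def by blast
next
  case False
  note rel = sc_normal_form_binary_relations[OF assms]
  have lm: "lam \<noteq> 0 \<or> mu \<noteq> 0" using False by auto
  then have b22: "b22 = 0" using rel(1,2) by auto
  show ?thesis
  proof (cases "b12 = 0 \<and> b21 = 0")
    case True
    with False have "b11 \<noteq> 0" and "lam \<noteq> mu" by auto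
    then show ?thesis
      using sc_normal_form_diagonal_classified True b22 by simp
  next
    case offdiagonal: False
    have "(lam^2 + lam * mu + mu^2) * b12 = 0" "(lam^2 + lam * mu + mu^2) * b21 = 0"
      using rel(3,4) by algebra+
    then have h: "lam^2 + lam * mu + mu^2 = 0" using offdiagonal by auto
    then have "lam \<noteq> 0" using lm by (auto simp: power2_eq_square)
    then show ?thesis
      using sc_normal_form_offdiagonal_classified[OF h _ rel(3,4)] offdiagonal b22 by simp
  qed
qed

section \<open>Reduction to a normal form\<close>

definition odd_vector :: "complex \<Rightarrow> complex \<Rightarrow> complex^3" where
  "odd_vector p q = (\<chi> k. if k = 0 then 0 else if k = 1 then p else q)"

lemma odd_vector_nth [simp]:
  "odd_vector p q $ 0 = 0" "odd_vector p q $ 1 = p" "odd_vector p q $ 2 = q"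
  by (simp_all add: odd_vector_def)

lemma scale_odd_vector: "t *s odd_vector p q = odd_vector (t * p) (t * q)"
  by (simp add: vec_eq_iff all_3)

lemma odd_vector_0: "odd_vector 0 0 = 0"
  by (simp add: vec_eq_iff all_3)

lemma even_times_odd_vector:
  assumes "graded_sc c"
  shows "smult c (axis 0 1) (odd_vector p q) =
    odd_vector (p * c 0 1 1 + q * c 0 2 1) (p * c 0 1 2 + q * c 0 2 2)"
  using graded_sc_vanishing[OF assms]
  by (simp add: vec_eq_iff all_3 smult_def sum_UNIV_3 axis_def)

lemma odd_vector_times_even:
  assumes "graded_sc c"
  shows "smult c (odd_vector p q) (axis 0 1) =
    odd_vector (p * c 1 0 1 + q * c 2 0 1) (p * c 1 0 2 + q * c 2 0 2)"
  using graded_sc_vanishing[OF assms]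
  by (simp add: vec_eq_iff all_3 smult_def sum_UNIV_3 axis_def)

definition odd_pairing ::
  "sc3 \<Rightarrow> complex \<Rightarrow> complex \<Rightarrow> complex \<Rightarrow> complex \<Rightarrow> complex" where
  "odd_pairing c p q p' q' =
    p * p' * c 1 1 0 + p * q' * c 1 2 0 + q * p' * c 2 1 0 + q * q' * c 2 2 0"

lemma odd_times_odd:
  assumes "graded_sc c"
  shows "smult c (odd_vector p q) (odd_vector p' q') = odd_pairing c p q p' q' *s axis 0 1"
  using graded_sc_vanishing[OF assms]
  by (simp add: vec_eq_iff all_3 smult_def sum_UNIV_3 axis_def odd_pairing_def algebra_simps)

lemma even_actions_square_zero_commute:
  assumes g: "graded_sc c" and b: "binary_assoc_super c" and a0: "c 0 0 0 = 0"
    and "j \<noteq> 0" and "m \<noteq> 0"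
  shows "c 0 j 1 * c 0 1 m + c 0 j 2 * c 0 2 m = 0"
    and "c j 0 1 * c 1 0 m + c j 0 2 * c 2 0 m = 0"
    and "c 0 j 1 * c 1 0 m + c 0 j 2 * c 2 0 m = c j 0 1 * c 0 1 m + c j 0 2 * c 0 2 m"
proof -
  have "j = 1 \<or> j = 2" "m = 1 \<or> m = 2"
    using assms(4,5) exhaust_3_zero by blast+
  then have "c 0 j 0 = 0" "c j 0 0 = 0" "c 0 0 m = 0"
    using graded_sc_vanishing[OF g] by auto
  moreover note binary_assoc_super_two_even[OF b, of j m]
  ultimately show "c 0 j 1 * c 0 1 m + c 0 j 2 * c 0 2 m = 0"
    and "c j 0 1 * c 1 0 m + c j 0 2 * c 2 0 m = 0"
    and "c 0 j 1 * c 1 0 m + c 0 j 2 * c 2 0 m = c j 0 1 * c 0 1 m + c j 0 2 * c 0 2 m"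
    using graded_sc_vanishing[OF g] a0
    by (simp_all add: assoc_coeff_def sum_UNIV_3 add_eq_0_iff)
qed

lemma odd_normal_basis_coordinates:
  assumes g: "graded_sc c" and b: "binary_assoc_super c" and a0: "c 0 0 0 = 0"
  shows "\<exists>xa xb ya yb lam mu.
      xa * c 0 1 1 + xb * c 0 2 1 = lam * ya \<and> xa * c 0 1 2 + xb * c 0 2 2 = lam * yb
    \<and> xa * c 1 0 1 + xb * c 2 0 1 = mu * ya \<and> xa * c 1 0 2 + xb * c 2 0 2 = mu * yb
    \<and> ya * c 0 1 1 + yb * c 0 2 1 = 0 \<and> ya * c 0 1 2 + yb * c 0 2 2 = 0
    \<and> ya * c 1 0 1 + yb * c 2 0 1 = 0 \<and> ya * c 1 0 2 + yb * c 2 0 2 = 0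
    \<and> xa * yb - xb * ya \<noteq> 0"
proof -
  note rel = even_actions_square_zero_commute[OF g b a0]
  note E = rel[OF distinct_3(4) distinct_3(4)] rel[OF distinct_3(4) distinct_3(5)]
    rel[OF distinct_3(5) distinct_3(4)] rel[OF distinct_3(5) distinct_3(5)]
  \<comment> \<open>L = e1 \<cdot> _ and R = _ \<cdot> e1 are commuting square-zero operators on the odd plane:
    take x with L x \<noteq> 0 and y = L x, or else x with R x \<noteq> 0 and y = R x; then y spans the
    kernel of both.\<close>
  consider (L1) "c 0 1 2 \<noteq> 0" | (L2) "c 0 1 2 = 0" "c 0 2 1 \<noteq> 0"
    | (R1) "c 0 1 2 = 0" "c 0 2 1 = 0" "c 1 0 2 \<noteq> 0"
    | (R2) "c 0 1 2 = 0" "c 0 2 1 = 0" "c 1 0 2 = 0" "c 2 0 1 \<noteq> 0"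
    | (zero) "c 0 1 2 = 0" "c 0 2 1 = 0" "c 1 0 2 = 0" "c 2 0 1 = 0"
    by blast
  then show ?thesis
  proof cases
    case L1
    define mu where "mu = c 1 0 2 / c 0 1 2"
    have "mu * c 0 1 2 = c 1 0 2" using L1 by (simp add: mu_def)
    show ?thesis
      apply (rule exI[of _ 1], rule exI[of _ 0], rule exI[of _ "c 0 1 1"], rule exI[of _ "c 0 1 2"],
          rule exI[of _ 1], rule exI[of _ mu], intro conjI)
      using E L1 \<open>mu * c 0 1 2 = c 1 0 2\<close> by algebra+
  next
    case L2
    define mu where "mu = c 2 0 1 / c 0 2 1"
    have "mu * c 0 2 1 = c 2 0 1" using L2 by (simp add: mu_def)
    show ?thesis
      apply (rule exI[of _ 0], rule exI[of _ 1], rule exI[of _ "c 0 2 1"], rule exI[of _ "c 0 2 2"],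
          rule exI[of _ 1], rule exI[of _ mu], intro conjI)
      using E L2 \<open>mu * c 0 2 1 = c 2 0 1\<close> by algebra+
  next
    case R1
    show ?thesis
      apply (rule exI[of _ 1], rule exI[of _ 0], rule exI[of _ "c 1 0 1"], rule exI[of _ "c 1 0 2"],
          rule exI[of _ 0], rule exI[of _ 1], intro conjI)
      using E R1 by algebra+
  next
    case R2
    show ?thesis
      apply (rule exI[of _ 0], rule exI[of _ 1], rule exI[of _ "c 2 0 1"], rule exI[of _ "c 2 0 2"],
          rule exI[of _ 0], rule exI[of _ 1], intro conjI)
      using E R2 by algebra+
  next
    case zero
    show ?thesis
      apply (rule exI[of _ 1], rule exI[of _ 0], rule exI[of _ 0], rule exI[of _ 1],
          rule exI[of _ 0], rule exI[of _ 0], intro conjI)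
      using E zero by algebra+
  qed
qed

lemma odd_normal_basis:
  assumes g: "graded_sc c" and b: "binary_assoc_super c" and a0: "c 0 0 0 = 0"
  obtains xa xb ya yb lam mu where "xa * yb - xb * ya \<noteq> 0"
    and "smult c (axis 0 1) (odd_vector xa xb) = lam *s odd_vector ya yb"
    and "smult c (odd_vector xa xb) (axis 0 1) = mu *s odd_vector ya yb"
    and "smult c (axis 0 1) (odd_vector ya yb) = 0"
    and "smult c (odd_vector ya yb) (axis 0 1) = 0"
  using odd_normal_basis_coordinates[OF g b a0] that
  by (auto simp: even_times_odd_vector[OF g] odd_vector_times_even[OF g] scale_odd_vector
      simp flip: odd_vector_0)

lemma sc_iso_sc_normal_form:
  assumes g: "graded_sc c" and b: "binary_assoc_super c" and a0: "c 0 0 0 = 0"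
  obtains lam mu b11 b12 b21 b22 where "sc_iso c (sc_normal_form lam mu b11 b12 b21 b22)"
proof -
  obtain xa xb ya yb lam mu where det: "xa * yb - xb * ya \<noteq> 0"
    and ex: "smult c (axis 0 1) (odd_vector xa xb) = lam *s odd_vector ya yb"
    and xe: "smult c (odd_vector xa xb) (axis 0 1) = mu *s odd_vector ya yb"
    and ey: "smult c (axis 0 1) (odd_vector ya yb) = 0"
    and ye: "smult c (odd_vector ya yb) (axis 0 1) = 0"
    by (rule odd_normal_basis[OF g b a0])
  define P :: "complex^3^3" where "P = (\<chi> r s. if s = 0 then axis 0 1 $ r
    else if s = 1 then odd_vector xa xb $ r else odd_vector ya yb $ r)"
  have cols: "column 0 P = axis 0 1" "column 1 P = odd_vector xa xb"
    "column 2 P = odd_vector ya yb"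
    by (simp_all add: P_def column_def)
  have blk: "block_diagonal P"
    by (simp add: P_def block_diagonal_def axis_def)
  have inv: "invertible P"
    unfolding invertible_block_diagonal_iff[OF blk] using det
    by (simp add: P_def axis_def mult.commute)
  have Pv: "P *v z = z$0 *s axis 0 1 + z$1 *s odd_vector xa xb + z$2 *s odd_vector ya yb" for z
    by (simp add: matrix_mult_sum sum_UNIV_3 cols)
  have ee: "smult c (axis 0 1) (axis 0 1) = 0"
    using graded_sc_vanishing[OF g] a0 by (simp add: smult_axis vec_eq_iff all_3)
  let ?N = "sc_normal_form lam mu (odd_pairing c xa xb xa xb) (odd_pairing c xa xb ya yb)
    (odd_pairing c ya yb xa xb) (odd_pairing c ya yb ya yb)"
  have "\<forall>i j. smult c (column i P) (column j P) = P *v (\<chi> k. ?N i j k)"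
    unfolding all_3 Pv cols using ee ex xe ey ye odd_times_odd[OF g]
    by (simp add: sc_normal_form_def)
  then have "sc_iso ?N c"
    by (intro sc_iso_of_basis[OF inv blk]) blast
  then show ?thesis
    by (rule that[OF sc_iso_sym])
qed

theorem mainTheorem19:
  fixes c :: sc3
  assumes "graded_sc c" and "binary_assoc_super c"
  shows "sc_associative c
    \<or> sc_iso c (R01 (\<i> * complex_of_real (sqrt 3)))
    \<or> sc_iso c (R01 (- \<i> * complex_of_real (sqrt 3)))
    \<or> (\<exists>\<alpha>. \<alpha> \<noteq> 0 \<and> sc_iso c (R07 \<alpha>))
    \<or> sc_iso c R28"
proof -
  have "sc_classified c"
  proof (cases "c 0 0 0 = 0")
    case True
    then obtain lam mu b11 b12 b21 b22
      where iso: "sc_iso c (sc_normal_form lam mu b11 b12 b21 b22)"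
      using sc_iso_sc_normal_form assms by blast
    then have "binary_assoc_super (sc_normal_form lam mu b11 b12 b21 b22)"
      using sc_iso_binary_assoc_super assms(2) by blast
    then show ?thesis
      using sc_classified_iso[OF iso] sc_normal_form_classified by blast
  next
    case False
    then show ?thesis
      using sc_associative_if_even_square_nonzero assms unfolding sc_classified_def by blast
  qed
  then show ?thesis
    unfolding sc_classified_def .
qed

end
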